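(* Let $S\in\mathbb{R}^{nd\times p}$ be such that every $d\times d$ diagonal block of $SS^{\top}$ equals $I_d$. Then for every matrix $X\in\mathbb{R}^{nd\times nd}$, \[ \|X\circ SS^{\top}\|_{\mathrm{op}}\le\|X\|_{\mathrm{op}}, \] where $\circ$ denotes the Hadamard (entrywise) product. *)

theory Defs
  imports "HOL-Analysis.Analysis"
begin

definition hadamard :: "real^'n^'m \<Rightarrow> real^'n^'m \<Rightarrow> real^'n^'m" where
  "hadamard A B = (\<chi> i j. A $ i $ j * B $ i $ j)"

definition opnorm :: "real^'n^'m \<Rightarrow> real" where
  "opnorm A = onorm (\<lambda>v. A *v v)"

end

theory Submission
  imports Defs
begin

text \<open>Write \<open>G = S S\<^sup>T = \<Sum>\<^sub>k s\<^sub>k s\<^sub>k\<^sup>T\<close> with \<open>s\<^sub>k\<close> the columns of \<open>S\<close>. Then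
  \<open>w\<^sup>T (X \<circ> G) v = \<Sum>\<^sub>k (w \<circ> s\<^sub>k)\<^sup>T X (v \<circ> s\<^sub>k)\<close>, and Cauchy-Schwarz (once in each
  summand, once for the sum over \<open>k\<close>) bounds this by
  \<open>\<parallel>X\<parallel> sqrt (\<Sum>\<^sub>k \<parallel>w \<circ> s\<^sub>k\<parallel>\<^sup>2) sqrt (\<Sum>\<^sub>k \<parallel>v \<circ> s\<^sub>k\<parallel>\<^sup>2)\<close>, where
  \<open>\<Sum>\<^sub>k \<parallel>w \<circ> s\<^sub>k\<parallel>\<^sup>2 = \<Sum>\<^sub>r w\<^sub>r\<^sup>2 G\<^sub>r\<^sub>r \<le> \<parallel>w\<parallel>\<^sup>2\<close>. Only the diagonal of \<open>G\<close> matters.\<close>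

lemma inner_hadamard_Gram_eq_sum:
  fixes S :: "real^'p::finite^'m::finite" and X :: "real^'m^'m" and w v :: "real^'m"
  shows "w \<bullet> (hadamard X (S ** transpose S) *v v) =
    (\<Sum>k\<in>UNIV. (\<chi> r. w$r * S$r$k) \<bullet> (X *v (\<chi> r. v$r * S$r$k)))"
proof -
  have "w \<bullet> (hadamard X (S ** transpose S) *v v) =
     (\<Sum>r\<in>UNIV. \<Sum>c\<in>UNIV. \<Sum>k\<in>UNIV. w$r * (X$r$c * (S$r$k * S$c$k)) * v$c)"
    by (simp add: inner_vec_def hadamard_def matrix_vector_mult_def matrix_matrix_mult_def
        transpose_def sum_distrib_left sum_distrib_right mult.assoc)
  also have "\<dots> = (\<Sum>k\<in>UNIV. \<Sum>r\<in>UNIV. \<Sum>c\<in>UNIV. w$r * (X$r$c * (S$r$k * S$c$k)) * v$c)"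
    by (subst sum.swap, subst (2) sum.swap, simp)
  also have "\<dots> = (\<Sum>k\<in>UNIV. (\<chi> r. w$r * S$r$k) \<bullet> (X *v (\<chi> r. v$r * S$r$k)))"
    by (simp add: inner_vec_def matrix_vector_mult_def sum_distrib_left sum_distrib_right
        mult_ac)
  finally show ?thesis .
qed

lemma sum_norm_sq_scaled_by_columns_le:
  fixes S :: "real^'p::finite^'m::finite" and w :: "real^'m"
  assumes "\<And>r. (S ** transpose S) $ r $ r \<le> 1"
  shows "(\<Sum>k\<in>UNIV. (norm (\<chi> r. w$r * S$r$k))\<^sup>2) \<le> (norm w)\<^sup>2"
proof -
  have "(\<Sum>k\<in>UNIV. (norm (\<chi> r. w$r * S$r$k))\<^sup>2) = (\<Sum>k\<in>UNIV. \<Sum>r\<in>UNIV. (w$r)\<^sup>2 * (S$r$k)\<^sup>2)"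
    by (simp add: norm_vec_def L2_set_def power_mult_distrib sum_nonneg)
  also have "\<dots> = (\<Sum>r\<in>UNIV. (w$r)\<^sup>2 * (S ** transpose S) $ r $ r)"
    by (subst sum.swap)
      (simp add: sum_distrib_left power2_eq_square matrix_matrix_mult_def transpose_def)
  also have "\<dots> \<le> (\<Sum>r\<in>UNIV. (w$r)\<^sup>2)"
    by (rule sum_mono) (simp add: assms mult_left_le)
  also have "\<dots> = (norm w)\<^sup>2"
    by (simp add: norm_vec_def L2_set_def sum_nonneg)
  finally show ?thesis .
qed

lemma inner_matrix_vector_le_opnorm:
  fixes X :: "real^'n::finite^'m::finite"
  shows "u \<bullet> (X *v v) \<le> opnorm X * (norm u * norm v)"
proof -
  have "u \<bullet> (X *v v) \<le> norm u * norm (X *v v)"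
    by (rule norm_cauchy_schwarz)
  also have "\<dots> \<le> norm u * (opnorm X * norm v)"
    unfolding opnorm_def by (rule mult_left_mono[OF onorm]) simp_all
  finally show ?thesis by (simp add: mult_ac)
qed

theorem opnorm_hadamard_Gram_le:
  fixes S :: "real^'p::finite^'m::finite" and X :: "real^'m^'m"
  assumes diag: "\<And>r. (S ** transpose S) $ r $ r \<le> 1"
  shows "opnorm (hadamard X (S ** transpose S)) \<le> opnorm X"
  unfolding opnorm_def
proof (rule onorm_le)
  fix v :: "real^'m"
  define w where "w = hadamard X (S ** transpose S) *v v"
  define scale where "scale u k = (\<chi> r. u$r * S$r$k)" for u :: "real^'m" and k
  have "(norm w)\<^sup>2 = (\<Sum>k\<in>UNIV. scale w k \<bullet> (X *v scale v k))"
    unfolding power2_norm_eq_inner scale_def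
    by (subst (2) w_def) (rule inner_hadamard_Gram_eq_sum)
  also have "\<dots> \<le> (\<Sum>k\<in>UNIV. opnorm X * (\<bar>norm (scale w k)\<bar> * \<bar>norm (scale v k)\<bar>))"
    by (rule sum_mono) (simp add: inner_matrix_vector_le_opnorm)
  also have "\<dots> \<le> opnorm X *
      (L2_set (\<lambda>k. norm (scale w k)) UNIV * L2_set (\<lambda>k. norm (scale v k)) UNIV)"
    unfolding sum_distrib_left[symmetric] opnorm_def
    by (rule mult_left_mono[OF L2_set_mult_ineq onorm_pos_le]) simp
  also have "\<dots> \<le> opnorm X * (norm w * norm v)"
    using sum_norm_sq_scaled_by_columns_le[OF diag]
    by (intro mult_left_mono mult_mono)
      (simp_all add: L2_set_def scale_def real_le_lsqrt opnorm_def onorm_pos_le L2_set_nonneg sum_nonneg)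
  finally have "norm w * norm w \<le> norm w * (opnorm X * norm v)"
    by (simp add: power2_eq_square mult_ac)
  then show "norm (hadamard X (S ** transpose S) *v v) \<le> onorm ((*v) X) * norm v"
    using onorm_pos_le[of "(*v) X"]
    by (cases "norm w = 0") (auto simp: w_def opnorm_def)
qed

theorem lemma8:
  fixes S :: "real^'p::finite^('n::finite \<times> 'd::finite)" and X :: "real^('n \<times> 'd)^('n \<times> 'd)"
  assumes "\<And>i a b. (S ** transpose S) $ (i, a) $ (i, b) = (if a = b then 1 else 0)"
  shows "opnorm (hadamard X (S ** transpose S)) \<le> opnorm X"
proof (rule opnorm_hadamard_Gram_le)
  fix r :: "'n \<times> 'd"
  show "(S ** transpose S) $ r $ r \<le> 1"
    using assms[of "fst r" "snd r" "snd r"] by simp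
qed

end
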